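(* Let $\mathcal{D}$ be the set of density operators on a finite-dimensional Hilbert space, with trace distance $d(\rho,\sigma)=\frac12\|\rho-\sigma\|_1$. Let $S_1\subseteq S_2\subseteq\cdots$ be closed convex subsets of $\mathcal{D}$, and let $V\subseteq\mathcal{D}$ be a set such that for every $\sigma\in V$ and every $\varepsilon>0$ there exist $N$ and $\eta\in S_N$ with $d(\sigma,\eta)<\varepsilon$. Let $\kappa\in V$ be such that for some $\delta>0$ every Hermitian unit-trace operator $\omega$ with $\|\omega-\kappa\|_1\le\delta$ is a density operator belonging to $V$. Then $\kappa\in S_n$ for some $n$. *)

theory Defs
  imports "HOL-Analysis.Analysis"
begin

definition cadj :: "complex^'n^'n \<Rightarrow> complex^'n^'n" where
  "cadj A = (\<chi> i j. cnj (A $ j $ i))"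

definition herm :: "complex^'n^'n \<Rightarrow> bool" where
  "herm A \<longleftrightarrow> cadj A = A"

definition cinner :: "complex^'n \<Rightarrow> complex^'n \<Rightarrow> complex" where
  "cinner x y = (\<Sum>i\<in>UNIV. cnj (x $ i) * y $ i)"

definition psd :: "complex^'n^'n \<Rightarrow> bool" where
  "psd A \<longleftrightarrow> (\<forall>x. Im (cinner x (A *v x)) = 0 \<and> Re (cinner x (A *v x)) \<ge> 0)"

definition density :: "complex^'n^'n \<Rightarrow> bool" where
  "density A \<longleftrightarrow> herm A \<and> psd A \<and> trace A = 1"

definition mat_abs :: "complex^'n^'n \<Rightarrow> complex^'n^'n" where
  "mat_abs X = (THE P. psd P \<and> P ** P = cadj X ** X)"

definition trnorm :: "complex^'n^'n \<Rightarrow> real" where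
  "trnorm X = Re (trace (mat_abs X))"

definition trdist :: "complex^'n^'n \<Rightarrow> complex^'n^'n \<Rightarrow> real" where
  "trdist \<rho> \<sigma> = trnorm (\<rho> - \<sigma>) / 2"

definition trclosed :: "(complex^'n^'n) set \<Rightarrow> bool" where
  "trclosed S \<longleftrightarrow> (\<forall>\<rho>. density \<rho> \<longrightarrow> (\<forall>e>0. \<exists>\<sigma>\<in>S. trdist \<rho> \<sigma> < e) \<longrightarrow> \<rho> \<in> S)"

end

theory Submission
  imports Defs
begin

text \<open>Let \<open>U\<close> be the union of the increasing convex sets \<open>S n\<close>; it is convex. By the spectral
  theorem the trace norm of a Hermitian matrix is the sum of the absolute values of its eigenvalues,
  so on Hermitian matrices it is equivalent to the Euclidean norm. Hence \<open>V\<close> lies in the Euclidean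
  closure of \<open>U\<close>, and \<open>\<kappa>\<close> has a neighbourhood in the affine space of Hermitian unit-trace matrices
  that is contained in \<open>V\<close>. Thus \<open>\<kappa>\<close> lies in the relative interior of the closure of \<open>U\<close>, which
  for a convex set equals the relative interior of \<open>U\<close> itself; in particular \<open>\<kappa> \<in> U\<close>.\<close>

lemma cinner_add_left: "cinner (x + y) z = cinner x z + cinner y z"
  by (simp add: cinner_def sum.distrib distrib_right)

lemma cinner_add_right: "cinner x (y + z) = cinner x y + cinner x z"
  by (simp add: cinner_def sum.distrib distrib_left)

lemma cinner_scaleC_left: "cinner (c *s x) y = cnj c * cinner x y"
  by (simp add: cinner_def sum_distrib_left mult_ac)

lemma cinner_scaleC_right: "cinner x (c *s y) = c * cinner x y"
  by (simp add: cinner_def sum_distrib_left mult_ac)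

lemma cinner_zero_right [simp]: "cinner x 0 = 0"
  by (simp add: cinner_def)

lemma cnj_cinner: "cnj (cinner x y) = cinner y x"
  by (simp add: cinner_def mult_ac)

lemma scaleR_eq_scaleC_of_real: "r *\<^sub>R (x::complex^'n) = complex_of_real r *s x"
  by (simp add: vec_eq_iff scaleR_conv_of_real[where 'a=complex])

lemma cinner_scaleR_right: "cinner x (r *\<^sub>R y) = of_real r * cinner x y"
  by (simp add: scaleR_eq_scaleC_of_real cinner_scaleC_right)

lemma inner_eq_Re_cinner: "(x::complex^'n) \<bullet> y = Re (cinner x y)"
  by (simp add: inner_vec_def cinner_def inner_complex_def Re_sum)

lemma cinner_self: "cinner x x = of_real ((norm x)\<^sup>2)"
proof -
  have "Im (cinner x x) = 0"
    by (simp add: cinner_def Im_sum)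
  moreover have "(norm x)\<^sup>2 = x \<bullet> x"
    by (simp add: power2_norm_eq_inner)
  ultimately show ?thesis
    by (simp add: inner_eq_Re_cinner complex_eq_iff)
qed

lemma cinner_matrix_vector_mult: "cinner x (A *v y) = cinner (cadj A *v x) y"
proof -
  have "cinner x (A *v y) = (\<Sum>i\<in>UNIV. \<Sum>j\<in>UNIV. cnj (x $ i) * (A $ i $ j * y $ j))"
    by (simp add: cinner_def matrix_vector_mult_def sum_distrib_left)
  also have "\<dots> = (\<Sum>j\<in>UNIV. \<Sum>i\<in>UNIV. cnj (x $ i) * (A $ i $ j * y $ j))"
    by (rule sum.swap)
  also have "\<dots> = cinner (cadj A *v x) y"
    by (simp add: cinner_def matrix_vector_mult_def cadj_def sum_distrib_right mult_ac)
      (simp add: sum_distrib_left)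
  finally show ?thesis .
qed

lemma herm_cinner: "herm A \<Longrightarrow> cinner x (A *v y) = cinner (A *v x) y"
  by (simp add: herm_def cinner_matrix_vector_mult)

lemma herm_inner: "herm A \<Longrightarrow> x \<bullet> (A *v y) = (A *v x) \<bullet> y"
  by (simp add: inner_eq_Re_cinner herm_cinner)

lemma matrix_vector_mult_scaleR_complex: "(A::complex^'n^'m) *v (r *\<^sub>R x) = r *\<^sub>R (A *v x)"
  by (simp add: scaleR_eq_scaleC_of_real vector_scalar_commute)

lemma cinner_axis_matrix_vector_mult_axis: "cinner (axis a 1) (P *v axis b 1) = P $ a $ b"
  unfolding cinner_def axis_def matrix_vector_mult_def
  by (simp add: mult_delta_right mult_delta_left if_distrib[where f=cnj] cong: if_cong)

lemma cadj_diff: "cadj (A - B) = cadj A - cadj B"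
  by (simp add: cadj_def vec_eq_iff)

lemma herm_diff: "herm A \<Longrightarrow> herm B \<Longrightarrow> herm (A - B)"
  by (simp add: herm_def cadj_diff)

section \<open>The spectral theorem for Hermitian matrices\<close>

text \<open>If \<open>u\<close> maximises the quadratic form of a self-adjoint \<open>F\<close> along the line through \<open>u\<close> in
  direction \<open>F u\<close>, the derivative \<open>2 \<parallel>F u\<parallel>\<^sup>2\<close> of the form there must vanish.\<close>

lemma selfadjoint_form_max_on_line_imp_zero:
  fixes F :: "'a::real_inner \<Rightarrow> 'a"
  assumes lin: "linear F"
    and selfadj: "\<And>x y. x \<bullet> F y = F x \<bullet> y"
    and max: "\<And>t. (u + t *\<^sub>R F u) \<bullet> F (u + t *\<^sub>R F u) \<le> u \<bullet> F u"
  shows "F u = 0"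
proof (rule ccontr)
  assume "F u \<noteq> 0"
  define a where "a = F u \<bullet> F u"
  define c where "c = F u \<bullet> F (F u)"
  have a: "a > 0"
    using \<open>F u \<noteq> 0\<close> by (simp add: a_def)
  have form_on_line: "(u + t *\<^sub>R F u) \<bullet> F (u + t *\<^sub>R F u) = u \<bullet> F u + 2 * t * a + t\<^sup>2 * c" for t
  proof -
    have "u \<bullet> F (F u) = a"
      using selfadj[of u "F u"] by (simp add: a_def)
    then show ?thesis
      by (simp add: linear_add[OF lin] linear_scale[OF lin] inner_add_left inner_add_right
          a_def c_def algebra_simps power2_eq_square)
  qed
  define t where "t = a / (\<bar>c\<bar> + 1)"
  have t: "t > 0"
    using a by (simp add: t_def)
  have "t * (2 * a + t * c) \<le> 0"
    using max[of t] form_on_line[of t] by (simp add: algebra_simps power2_eq_square)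
  then have "2 * a + t * c \<le> 0"
    using t by (simp add: mult_le_0_iff)
  moreover have "t * \<bar>c\<bar> \<le> a"
    using a by (simp add: t_def field_simps)
  moreover have "- (t * \<bar>c\<bar>) \<le> t * c"
    using t by (metis abs_ge_minus_self abs_mult abs_of_pos minus_le_iff)
  ultimately show False
    using a by linarith
qed

lemma herm_eigenvector_if_form_max:
  fixes A :: "complex^'n^'n"
  assumes hA: "herm A" and W: "subspace W" and invariant: "\<And>x. x \<in> W \<Longrightarrow> A *v x \<in> W"
    and "u \<in> W" and "norm u = 1"
    and max: "\<And>x. x \<in> W \<Longrightarrow> norm x = 1 \<Longrightarrow> x \<bullet> (A *v x) \<le> u \<bullet> (A *v u)"
  shows "A *v u = complex_of_real (u \<bullet> (A *v u)) *s u"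
proof -
  define \<mu> where "\<mu> = u \<bullet> (A *v u)"
  have bound: "x \<bullet> (A *v x) \<le> \<mu> * (x \<bullet> x)" if "x \<in> W" for x
  proof (cases "x = 0")
    case False
    have "((1 / norm x) *\<^sub>R x) \<bullet> (A *v ((1 / norm x) *\<^sub>R x)) \<le> \<mu>"
      unfolding \<mu>_def using False by (intro max subspace_scale[OF W that]) simp
    then have "(x \<bullet> (A *v x)) / (norm x)\<^sup>2 \<le> \<mu>"
      by (simp add: matrix_vector_mult_scaleR_complex power2_eq_square)
    then show ?thesis
      using False by (simp add: divide_le_eq power2_norm_eq_inner)
  qed simp
  define F where "F = (\<lambda>y. A *v y - \<mu> *\<^sub>R y)"
  have "F u = 0"
  proof (rule selfadjoint_form_max_on_line_imp_zero[of F])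
    show "linear F"
      by (rule linearI)
        (simp_all add: F_def matrix_vector_right_distrib matrix_vector_mult_scaleR_complex algebra_simps)
    show "x \<bullet> F y = F x \<bullet> y" for x y
      by (simp add: F_def inner_diff_left inner_diff_right herm_inner[OF hA])
    have "u \<bullet> F u = 0"
      using \<open>norm u = 1\<close> by (simp add: F_def inner_diff_right \<mu>_def flip: power2_norm_eq_inner)
    moreover have "u + t *\<^sub>R F u \<in> W" for t
      unfolding F_def using W \<open>u \<in> W\<close> invariant
      by (intro subspace_add subspace_scale subspace_diff) auto
    ultimately show "(u + t *\<^sub>R F u) \<bullet> F (u + t *\<^sub>R F u) \<le> u \<bullet> F u" for t
      using bound by (simp add: F_def inner_diff_right)
  qed
  then show ?thesis
    by (simp add: F_def \<mu>_def scaleR_eq_scaleC_of_real)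
qed

text \<open>The eigenvector maximises \<open>x \<bullet> (A *v x)\<close> on the unit sphere of the orthogonal complement
  of the \<open>v i\<close>, which is \<open>A\<close>-invariant.\<close>

lemma herm_unit_eigenvector_orthogonal:
  fixes A :: "complex^'n^'n"
  assumes hA: "herm A"
    and eigen: "\<forall>i\<in>I. A *v v i = complex_of_real (l i) *s v i"
    and x0: "\<forall>i\<in>I. cinner (v i) x0 = 0" "x0 \<noteq> 0"
  shows "\<exists>u \<mu>. (\<forall>i\<in>I. cinner (v i) u = 0) \<and> norm u = 1 \<and> A *v u = complex_of_real \<mu> *s u"
proof -
  define W where "W = {x. \<forall>i\<in>I. cinner (v i) x = 0}"
  have W: "subspace W"
    by (simp add: subspace_def W_def cinner_add_right cinner_scaleR_right)
  have "closed W"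
  proof -
    have "closed {x. cinner (v i) x = 0}" for i
      unfolding cinner_def by (intro closed_Collect_eq continuous_intros)
    moreover have "W = (\<Inter>i\<in>I. {x. cinner (v i) x = 0})"
      by (auto simp: W_def)
    ultimately show ?thesis
      by auto
  qed
  define K where "K = W \<inter> sphere 0 1"
  have "compact K"
    unfolding K_def using \<open>closed W\<close> by (rule closed_Int_compact) simp
  moreover have "(1 / norm x0) *\<^sub>R x0 \<in> K"
    using subspace_scale[OF W, of x0] x0 by (simp add: W_def K_def)
  moreover have "continuous_on K (\<lambda>x. x \<bullet> (A *v x))"
    unfolding inner_eq_Re_cinner cinner_def matrix_vector_mult_def by (intro continuous_intros)
  ultimately obtain u where "u \<in> K" and max: "\<forall>x\<in>K. x \<bullet> (A *v x) \<le> u \<bullet> (A *v u)"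
    using continuous_attains_sup[of K] by blast
  have "A *v u = complex_of_real (u \<bullet> (A *v u)) *s u"
  proof (rule herm_eigenvector_if_form_max[OF hA W])
    show "A *v x \<in> W" if "x \<in> W" for x
      using that herm_cinner[OF hA] eigen by (simp add: W_def cinner_scaleC_left)
  qed (use \<open>u \<in> K\<close> max in \<open>auto simp: K_def\<close>)
  then show ?thesis
    using \<open>u \<in> K\<close> by (auto simp: W_def K_def)
qed

lemma exists_nonzero_orthogonal:
  fixes v :: "'n \<Rightarrow> complex^'n"
  assumes "I \<noteq> UNIV"
  shows "\<exists>x. x \<noteq> 0 \<and> (\<forall>i\<in>I. cinner (v i) x = 0)"
proof (rule ccontr)
  assume no_orthogonal: "\<not> ?thesis"
  obtain j where "j \<notin> I"
    using assms by blast
  define M :: "complex^'n^'n" where "M = (\<chi> k m. if k \<in> I then cnj (v k $ m) else 0)"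
  have "M *v x = (\<chi> k. if k \<in> I then cinner (v k) x else 0)" for x
    by (simp add: M_def matrix_vector_mult_def cinner_def vec_eq_iff)
  then have "\<forall>x. M *v x = 0 \<longrightarrow> x = 0"
    using no_orthogonal by (auto simp: vec_eq_iff split: if_splits)
  then obtain B where "B ** M = mat 1"
    using matrix_left_invertible_ker by blast
  then have "M ** B = mat 1"
    using matrix_left_right_inverse by blast
  then have "(M ** B) $ j $ j = 1"
    by (simp add: mat_def)
  moreover have "(M ** B) $ j $ j = 0"
    using \<open>j \<notin> I\<close> by (simp add: M_def matrix_matrix_mult_def)
  ultimately show False
    by simp
qed

definition orthonormal_on :: "('n \<Rightarrow> complex^'n) \<Rightarrow> 'n set \<Rightarrow> bool" where
  "orthonormal_on v I \<longleftrightarrow> (\<forall>a\<in>I. \<forall>b\<in>I. cinner (v a) (v b) = (if a = b then 1 else 0))"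

lemma orthonormal_on_cinner:
  "orthonormal_on v I \<Longrightarrow> a \<in> I \<Longrightarrow> b \<in> I \<Longrightarrow> cinner (v a) (v b) = (if a = b then 1 else 0)"
  by (simp add: orthonormal_on_def)

lemma herm_orthonormal_eigenvectors_on:
  fixes A :: "complex^'n^'n"
  assumes hA: "herm A" and "finite I"
  shows "\<exists>v l. orthonormal_on v I \<and> (\<forall>a\<in>I. A *v v a = complex_of_real (l a) *s v a)"
  using \<open>finite I\<close>
proof (induction I rule: finite_induct)
  case empty
  then show ?case
    by (simp add: orthonormal_on_def)
next
  case (insert j I)
  then obtain v l where orth: "orthonormal_on v I"
    and eigen: "\<forall>a\<in>I. A *v v a = complex_of_real (l a) *s v a"
    by blast
  obtain x where "x \<noteq> 0" "\<forall>i\<in>I. cinner (v i) x = 0"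
    using exists_nonzero_orthogonal[of I] insert(2) by blast
  then obtain u \<mu> where u: "\<forall>i\<in>I. cinner (v i) u = 0" "norm u = 1"
      "A *v u = complex_of_real \<mu> *s u"
    using herm_unit_eigenvector_orthogonal[OF hA eigen] by blast
  have "cinner u u = 1"
    using u(2) by (simp add: cinner_self)
  moreover have "cinner u (v i) = 0" if "i \<in> I" for i
    using u(1) that cnj_cinner[of "v i" u] by simp
  ultimately have "orthonormal_on (v(j := u)) (insert j I)"
    using orth insert(2) u(1) unfolding orthonormal_on_def by auto
  moreover have "\<forall>a\<in>insert j I. A *v (v(j := u)) a = complex_of_real ((l(j := \<mu>)) a) *s (v(j := u)) a"
    using eigen u(3) insert(2) by auto
  ultimately show ?case
    by blast
qed

lemma herm_orthonormal_eigenbasis: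
  fixes A :: "complex^'n^'n"
  assumes "herm A"
  shows "\<exists>v l. orthonormal_on v UNIV \<and> (\<forall>a. A *v v a = complex_of_real (l a) *s v a)"
  using herm_orthonormal_eigenvectors_on[OF assms, of UNIV] by auto

lemma orthonormal_basis_completeness:
  fixes v :: "'n \<Rightarrow> complex^'n"
  assumes "orthonormal_on v UNIV"
  shows "(\<Sum>b\<in>UNIV. v b $ a * cnj (v b $ c)) = (if a = c then 1 else 0)"
proof -
  define U :: "complex^'n^'n" where "U = (\<chi> a b. v b $ a)"
  have "cadj U ** U = mat 1"
    using assms
    by (simp add: U_def cadj_def matrix_matrix_mult_def mat_def vec_eq_iff orthonormal_on_def cinner_def)
  then have "U ** cadj U = mat 1"
    using matrix_left_right_inverse by blast
  then have "(U ** cadj U) $ a $ c = mat 1 $ a $ c"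
    by simp
  then show ?thesis
    by (simp add: U_def cadj_def matrix_matrix_mult_def mat_def)
qed

lemma orthonormal_on_norm_component_le_1:
  assumes "orthonormal_on v I" "b \<in> I"
  shows "cmod (v b $ a) \<le> 1"
proof -
  have "cinner (v b) (v b) = 1"
    using assms by (simp add: orthonormal_on_cinner)
  then have "(norm (v b))\<^sup>2 = 1"
    by (simp only: cinner_self of_real_eq_1_iff)
  then have "norm (v b) = 1"
    using power2_eq_1_iff[of "norm (v b)"] norm_ge_zero[of "v b"] by auto
  then show ?thesis
    using Finite_Cartesian_Product.norm_nth_le[of "v b" a] by simp
qed

definition spectral_mat :: "('n \<Rightarrow> complex^'n) \<Rightarrow> ('n \<Rightarrow> real) \<Rightarrow> complex^'n^'n" where
  "spectral_mat v f = (\<chi> a c. \<Sum>b\<in>UNIV. complex_of_real (f b) * (v b $ a * cnj (v b $ c)))"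

lemma herm_eq_spectral_mat:
  fixes A :: "complex^'n^'n"
  assumes orth: "orthonormal_on v UNIV" and eigen: "\<forall>b. A *v v b = complex_of_real (l b) *s v b"
  shows "A = spectral_mat v l"
proof -
  have "A $ a $ c = (\<Sum>b\<in>UNIV. complex_of_real (l b) * (v b $ a * cnj (v b $ c)))" for a c
  proof -
    have "A $ a $ c = (\<Sum>d\<in>UNIV. A $ a $ d * (if d = c then 1 else 0))"
      by (simp add: if_distrib cong: if_cong)
    also have "\<dots> = (\<Sum>d\<in>UNIV. \<Sum>b\<in>UNIV. A $ a $ d * (v b $ d * cnj (v b $ c)))"
      by (simp add: orthonormal_basis_completeness[OF orth] flip: sum_distrib_left)
    also have "\<dots> = (\<Sum>b\<in>UNIV. \<Sum>d\<in>UNIV. A $ a $ d * (v b $ d * cnj (v b $ c)))"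
      by (rule sum.swap)
    also have "\<dots> = (\<Sum>b\<in>UNIV. (A *v v b) $ a * cnj (v b $ c))"
      by (simp add: matrix_vector_mult_def sum_distrib_right mult_ac) (simp add: sum_distrib_left mult_ac)
    also have "\<dots> = (\<Sum>b\<in>UNIV. complex_of_real (l b) * (v b $ a * cnj (v b $ c)))"
      using eigen by (simp add: mult_ac)
    finally show ?thesis .
  qed
  then show ?thesis
    by (simp add: spectral_mat_def vec_eq_iff)
qed

lemma spectral_mat_mult:
  assumes orth: "orthonormal_on v UNIV"
  shows "spectral_mat v f ** spectral_mat v g = spectral_mat v (\<lambda>b. f b * g b)"
proof -
  let ?P = "\<lambda>b a c. v b $ a * cnj (v b $ c)"
  have "(\<Sum>d\<in>UNIV. (\<Sum>b\<in>UNIV. of_real (f b) * ?P b a d) * (\<Sum>b'\<in>UNIV. of_real (g b') * ?P b' d c))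
      = (\<Sum>b\<in>UNIV. of_real (f b * g b) * ?P b a c)" for a c
  proof -
    have "(\<Sum>d\<in>UNIV. (\<Sum>b\<in>UNIV. of_real (f b) * ?P b a d) * (\<Sum>b'\<in>UNIV. of_real (g b') * ?P b' d c))
        = (\<Sum>d\<in>UNIV. \<Sum>b\<in>UNIV. \<Sum>b'\<in>UNIV. of_real (f b) * ?P b a d * (of_real (g b') * ?P b' d c))"
      by (simp add: sum_product)
    also have "\<dots> = (\<Sum>b\<in>UNIV. \<Sum>b'\<in>UNIV. \<Sum>d\<in>UNIV. of_real (f b) * ?P b a d * (of_real (g b') * ?P b' d c))"
      by (rule trans[OF sum.swap sum.cong[OF refl sum.swap]])
    also have "\<dots> = (\<Sum>b\<in>UNIV. \<Sum>b'\<in>UNIV.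
        of_real (f b) * of_real (g b') * (v b $ a * cnj (v b' $ c)) * cinner (v b) (v b'))"
      by (simp add: cinner_def sum_distrib_left mult_ac)
    also have "\<dots> = (\<Sum>b\<in>UNIV. of_real (f b * g b) * ?P b a c)"
      by (simp add: orthonormal_on_cinner[OF orth] if_distrib cong: if_cong)
    finally show ?thesis .
  qed
  then show ?thesis
    by (simp add: spectral_mat_def matrix_matrix_mult_def vec_eq_iff)
qed

lemma cinner_spectral_mat:
  "cinner x (spectral_mat v f *v x) = complex_of_real (\<Sum>b\<in>UNIV. f b * (cmod (cinner (v b) x))\<^sup>2)"
proof -
  have "cinner x (spectral_mat v f *v x) = (\<Sum>a\<in>UNIV. \<Sum>c\<in>UNIV. \<Sum>b\<in>UNIV.
          cnj (x $ a) * (complex_of_real (f b) * (v b $ a * cnj (v b $ c))) * x $ c)"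
    by (simp add: cinner_def spectral_mat_def matrix_vector_mult_def sum_distrib_left
        sum_distrib_right mult_ac)
  also have "\<dots> = (\<Sum>b\<in>UNIV. \<Sum>a\<in>UNIV. \<Sum>c\<in>UNIV.
          cnj (x $ a) * (complex_of_real (f b) * (v b $ a * cnj (v b $ c))) * x $ c)"
    by (rule trans[OF sum.cong[OF refl sum.swap] sum.swap])
  also have "\<dots> = (\<Sum>b\<in>UNIV. complex_of_real (f b) * (cnj (cinner (v b) x) * cinner (v b) x))"
    by (simp add: cinner_def sum_distrib_left sum_distrib_right mult_ac)
  also have "\<dots> = complex_of_real (\<Sum>b\<in>UNIV. f b * (cmod (cinner (v b) x))\<^sup>2)"
    by (simp add: complex_norm_square[symmetric] mult_ac)
  finally show ?thesis .
qed

lemma psd_spectral_mat: "(\<And>b. f b \<ge> 0) \<Longrightarrow> psd (spectral_mat v f)"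
  by (simp add: psd_def cinner_spectral_mat sum_nonneg)

lemma trace_spectral_mat:
  assumes "orthonormal_on v UNIV"
  shows "trace (spectral_mat v f) = complex_of_real (\<Sum>b\<in>UNIV. f b)"
proof -
  have "trace (spectral_mat v f)
      = (\<Sum>a\<in>UNIV. \<Sum>b\<in>UNIV. complex_of_real (f b) * (v b $ a * cnj (v b $ a)))"
    by (simp add: trace_def spectral_mat_def)
  also have "\<dots> = (\<Sum>b\<in>UNIV. complex_of_real (f b) * cinner (v b) (v b))"
    by (subst sum.swap) (simp add: cinner_def sum_distrib_left mult_ac)
  also have "\<dots> = complex_of_real (\<Sum>b\<in>UNIV. f b)"
    by (simp add: orthonormal_on_cinner[OF assms])
  finally show ?thesis .
qed

section \<open>Absolute value and trace norm of a Hermitian matrix\<close>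

lemma cinner_add_scaleC_matrix_vector_mult:
  "cinner (u + c *s w) (P *v (u + c *s w)) = cinner u (P *v u) + c * cinner u (P *v w)
     + cnj c * cinner w (P *v u) + cnj c * c * cinner w (P *v w)"
  by (simp add: matrix_vector_right_distrib vector_scalar_commute cinner_add_left cinner_add_right
      cinner_scaleC_left cinner_scaleC_right algebra_simps)

text \<open>Polarisation with the vectors \<open>e\<^sub>a + e\<^sub>b\<close> and \<open>e\<^sub>a + \<i> e\<^sub>b\<close>.\<close>

lemma psd_imp_herm:
  assumes "psd P"
  shows "herm P"
proof -
  have real_form: "Im (cinner x (P *v x)) = 0" for x
    using assms by (simp add: psd_def)
  have diag: "Im (P $ a $ a) = 0" for a
    using real_form[of "axis a 1"] by (simp add: cinner_axis_matrix_vector_mult_axis)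
  have "cnj (P $ b $ a) = P $ a $ b" for a b
  proof -
    have "Im (P $ a $ b + P $ b $ a) = 0"
      using real_form[of "axis a 1 + 1 *s axis b 1"] diag[of a] diag[of b]
      unfolding cinner_add_scaleC_matrix_vector_mult by (simp add: cinner_axis_matrix_vector_mult_axis)
    moreover have "Im (\<i> * P $ a $ b - \<i> * P $ b $ a) = 0"
      using real_form[of "axis a 1 + \<i> *s axis b 1"] diag[of a] diag[of b]
      unfolding cinner_add_scaleC_matrix_vector_mult by (simp add: cinner_axis_matrix_vector_mult_axis)
    ultimately show ?thesis
      by (simp add: complex_eq_iff)
  qed
  then show ?thesis
    by (simp add: herm_def cadj_def vec_eq_iff)
qed

lemma psd_form_eq_0_imp_kernel:
  assumes "psd P" and "Re (cinner w (P *v w)) = 0"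
  shows "P *v w = 0"
proof -
  have form: "x \<bullet> - (P *v x) = - Re (cinner x (P *v x))" for x
    by (simp add: inner_eq_Re_cinner[symmetric])
  have "- (P *v w) = 0"
  proof (rule selfadjoint_form_max_on_line_imp_zero[of "\<lambda>x. - (P *v x)"])
    show "linear (\<lambda>x. - (P *v x))"
      by (rule linearI) (simp_all add: matrix_vector_right_distrib matrix_vector_mult_scaleR_complex)
    show "x \<bullet> - (P *v y) = - (P *v x) \<bullet> y" for x y
      by (simp add: herm_inner[OF psd_imp_herm[OF \<open>psd P\<close>]])
    show "(w + t *\<^sub>R - (P *v w)) \<bullet> - (P *v (w + t *\<^sub>R - (P *v w))) \<le> w \<bullet> - (P *v w)" for t
      using assms unfolding form psd_def by simp
  qed
  then show ?thesis
    by simp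
qed

text \<open>The identity \<open>P (P - Q) + (P - Q) Q = P\<^sup>2 - Q\<^sup>2 = 0\<close> gives
  \<open>c (\<langle>w, P w\<rangle> + \<langle>w, Q w\<rangle>) = 0\<close>; by positivity either \<open>c = 0\<close> or \<open>P w = Q w = 0\<close>, and the latter
  also forces \<open>c = 0\<close>.\<close>

lemma psd_same_square_eigenvalue_diff_eq_0:
  fixes P Q :: "complex^'n^'n"
  assumes psdP: "psd P" and psdQ: "psd Q" and "P ** P = Q ** Q"
    and eigen: "(P - Q) *v w = complex_of_real c *s w" and "w \<noteq> 0"
  shows "c = 0"
proof (rule ccontr)
  assume "c \<noteq> 0"
  have herm_diff_PQ: "herm (P - Q)"
    using psdP psdQ by (intro herm_diff psd_imp_herm)
  have "P *v ((P - Q) *v w) + (P - Q) *v (Q *v w) = (P ** P) *v w - (Q ** Q) *v w"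
    by (simp add: matrix_vector_mult_diff_distrib matrix_vector_mult_diff_rdistrib
        matrix_vector_mul_assoc[symmetric])
  then have "P *v ((P - Q) *v w) + (P - Q) *v (Q *v w) = 0"
    using \<open>P ** P = Q ** Q\<close> by simp
  then have "cinner w (P *v ((P - Q) *v w)) + cinner w ((P - Q) *v (Q *v w)) = 0"
    by (metis cinner_add_right cinner_zero_right)
  then have "complex_of_real c * (cinner w (P *v w) + cinner w (Q *v w)) = 0"
    using herm_cinner[OF herm_diff_PQ, of w "Q *v w"] eigen
    by (simp add: vector_scalar_commute cinner_scaleC_right cinner_scaleC_left distrib_left)
  then have "cinner w (P *v w) + cinner w (Q *v w) = 0"
    using \<open>c \<noteq> 0\<close> by simp
  moreover have "Re (cinner w (P *v w)) \<ge> 0" "Re (cinner w (Q *v w)) \<ge> 0"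
    using psdP psdQ by (auto simp: psd_def)
  ultimately have "P *v w = 0" "Q *v w = 0"
    using psd_form_eq_0_imp_kernel[OF psdP] psd_form_eq_0_imp_kernel[OF psdQ]
    by (simp_all add: complex_eq_iff)
  then have "complex_of_real c *s w = 0"
    using eigen by (simp add: matrix_vector_mult_diff_rdistrib)
  with \<open>c \<noteq> 0\<close> \<open>w \<noteq> 0\<close> show False
    by (simp add: vec_eq_iff)
qed

lemma psd_sqrt_unique:
  fixes P Q :: "complex^'n^'n"
  assumes "psd P" and "psd Q" and "P ** P = Q ** Q"
  shows "P = Q"
proof -
  have "herm (P - Q)"
    using assms by (intro herm_diff psd_imp_herm)
  then obtain v l where orth: "orthonormal_on v UNIV"
    and eigen: "\<forall>b. (P - Q) *v v b = complex_of_real (l b) *s v b"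
    using herm_orthonormal_eigenbasis by blast
  have "l b = 0" for b
  proof (rule psd_same_square_eigenvalue_diff_eq_0[OF assms])
    show "(P - Q) *v v b = complex_of_real (l b) *s v b"
      using eigen by blast
    show "v b \<noteq> 0"
      using orthonormal_on_cinner[OF orth, of b b] by (metis cinner_zero_right one_neq_zero UNIV_I)
  qed
  then have "P - Q = 0"
    using herm_eq_spectral_mat[OF orth eigen] by (simp add: spectral_mat_def vec_eq_iff)
  then show ?thesis
    by simp
qed

lemma mat_abs_herm:
  fixes X :: "complex^'n^'n"
  assumes "herm X"
  obtains v l where "orthonormal_on v UNIV" "X = spectral_mat v l"
    "mat_abs X = spectral_mat v (\<lambda>b. \<bar>l b\<bar>)"
proof -
  obtain v l where orth: "orthonormal_on v UNIV"
    and eigen: "\<forall>b. X *v v b = complex_of_real (l b) *s v b"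
    using herm_orthonormal_eigenbasis[OF assms] by blast
  have X: "X = spectral_mat v l"
    by (rule herm_eq_spectral_mat[OF orth eigen])
  define P where "P = spectral_mat v (\<lambda>b. \<bar>l b\<bar>)"
  have psdP: "psd P"
    unfolding P_def by (rule psd_spectral_mat) simp
  have sqP: "P ** P = cadj X ** X"
  proof -
    have "P ** P = spectral_mat v (\<lambda>b. l b * l b)"
      by (simp add: P_def spectral_mat_mult[OF orth] abs_mult_self_eq)
    also have "\<dots> = X ** X"
      by (simp add: X spectral_mat_mult[OF orth])
    finally show ?thesis
      using assms by (simp add: herm_def)
  qed
  have "mat_abs X = P"
    unfolding mat_abs_def
  proof (rule the_equality)
    show "psd P \<and> P ** P = cadj X ** X"
      using psdP sqP by simp
    show "Q = P" if "psd Q \<and> Q ** Q = cadj X ** X" for Q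
      using that psdP sqP psd_sqrt_unique[of Q P] by simp
  qed
  with orth X show ?thesis
    using that by (simp add: P_def)
qed

lemma trnorm_herm:
  fixes X :: "complex^'n^'n"
  assumes "herm X"
  obtains v l where "orthonormal_on v UNIV" "X = spectral_mat v l" "trnorm X = (\<Sum>b\<in>UNIV. \<bar>l b\<bar>)"
proof -
  obtain v l where orth: "orthonormal_on v UNIV" and "X = spectral_mat v l"
    and "mat_abs X = spectral_mat v (\<lambda>b. \<bar>l b\<bar>)"
    using mat_abs_herm[OF assms] by blast
  moreover have "trnorm X = (\<Sum>b\<in>UNIV. \<bar>l b\<bar>)"
    by (simp add: trnorm_def \<open>mat_abs X = _\<close> trace_spectral_mat[OF orth])
  ultimately show ?thesis
    using that by blast
qed

section \<open>Trace norm versus Euclidean norm\<close>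

lemma entry_le_trnorm:
  assumes "herm X"
  shows "cmod (X $ a $ c) \<le> trnorm X"
proof -
  obtain v l where orth: "orthonormal_on v UNIV" and X: "X = spectral_mat v l"
    and trnorm: "trnorm X = (\<Sum>b\<in>UNIV. \<bar>l b\<bar>)"
    using trnorm_herm[OF assms] by blast
  have "cmod (X $ a $ c) \<le> (\<Sum>b\<in>UNIV. cmod (complex_of_real (l b) * (v b $ a * cnj (v b $ c))))"
    unfolding X spectral_mat_def by (simp add: norm_sum)
  also have "\<dots> \<le> (\<Sum>b\<in>UNIV. \<bar>l b\<bar>)"
  proof (rule sum_mono)
    fix b
    have "cmod (v b $ a) * cmod (v b $ c) \<le> 1"
      using orthonormal_on_norm_component_le_1[OF orth] by (simp add: mult_le_one)
    then show "cmod (complex_of_real (l b) * (v b $ a * cnj (v b $ c))) \<le> \<bar>l b\<bar>"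
      by (simp add: norm_mult mult_left_le)
  qed
  finally show ?thesis
    using trnorm by simp
qed

lemma cmod_cinner_matrix_vector_mult_le:
  assumes "\<And>a. cmod (u $ a) \<le> 1" and "\<And>c. cmod (w $ c) \<le> 1"
  shows "cmod (cinner u (X *v w)) \<le> (\<Sum>a\<in>UNIV. \<Sum>c\<in>UNIV. cmod (X $ a $ c))"
proof -
  have "cinner u (X *v w) = (\<Sum>a\<in>UNIV. \<Sum>c\<in>UNIV. cnj (u $ a) * (X $ a $ c * w $ c))"
    by (simp add: cinner_def matrix_vector_mult_def sum_distrib_left)
  then have "cmod (cinner u (X *v w)) \<le> (\<Sum>a\<in>UNIV. cmod (\<Sum>c\<in>UNIV. cnj (u $ a) * (X $ a $ c * w $ c)))"
    by (simp add: norm_sum)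
  also have "\<dots> \<le> (\<Sum>a\<in>UNIV. \<Sum>c\<in>UNIV. cmod (cnj (u $ a) * (X $ a $ c * w $ c)))"
    by (intro sum_mono norm_sum)
  also have "\<dots> \<le> (\<Sum>a\<in>UNIV. \<Sum>c\<in>UNIV. cmod (X $ a $ c))"
  proof (intro sum_mono)
    fix a c
    have "cmod (u $ a) * cmod (w $ c) \<le> 1"
      using assms by (simp add: mult_le_one)
    then show "cmod (cnj (u $ a) * (X $ a $ c * w $ c)) \<le> cmod (X $ a $ c)"
      using mult_right_mono[OF _ norm_ge_zero, of "cmod (u $ a) * cmod (w $ c)" 1 "X $ a $ c"]
      by (simp add: norm_mult mult_ac)
  qed
  finally show ?thesis .
qed

lemma trnorm_le_sum_entries:
  fixes X :: "complex^'n^'n"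
  assumes "herm X"
  shows "trnorm X \<le> real CARD('n) * (\<Sum>a\<in>UNIV. \<Sum>c\<in>UNIV. cmod (X $ a $ c))"
proof -
  obtain v l where orth: "orthonormal_on v UNIV" and X: "X = spectral_mat v l"
    and trnorm: "trnorm X = (\<Sum>b\<in>UNIV. \<bar>l b\<bar>)"
    using trnorm_herm[OF assms] by blast
  have "\<bar>l b\<bar> \<le> (\<Sum>a\<in>UNIV. \<Sum>c\<in>UNIV. cmod (X $ a $ c))" for b
  proof -
    have sq: "(cmod (cinner (v b') (v b)))\<^sup>2 = (if b' = b then 1 else 0)" for b'
      by (simp add: orthonormal_on_cinner[OF orth])
    have "cinner (v b) (X *v v b) = complex_of_real (l b)"
      unfolding X cinner_spectral_mat sq by (simp add: if_distrib cong: if_cong)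
    then show ?thesis
      using cmod_cinner_matrix_vector_mult_le[of "v b" "v b" X]
        orthonormal_on_norm_component_le_1[OF orth] by simp
  qed
  then have "(\<Sum>b\<in>UNIV. \<bar>l b\<bar>) \<le> (\<Sum>b::'n\<in>UNIV. \<Sum>a\<in>UNIV. \<Sum>c\<in>UNIV. cmod (X $ a $ c))"
    by (intro sum_mono)
  then show ?thesis
    unfolding trnorm by simp
qed

lemma norm_vec_le_sum_norm: "norm (x::'a::real_normed_vector^'n) \<le> (\<Sum>i\<in>UNIV. norm (x $ i))"
  by (simp add: norm_vec_def L2_set_le_sum)

lemma norm_le_sum_entries: "norm (X::complex^'n^'m) \<le> (\<Sum>a\<in>UNIV. \<Sum>c\<in>UNIV. cmod (X $ a $ c))"
proof -
  have "norm X \<le> (\<Sum>a\<in>UNIV. norm (X $ a))"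
    by (rule norm_vec_le_sum_norm)
  also have "\<dots> \<le> (\<Sum>a\<in>UNIV. \<Sum>c\<in>UNIV. cmod (X $ a $ c))"
    by (intro sum_mono norm_vec_le_sum_norm)
  finally show ?thesis .
qed

lemma norm_le_trnorm:
  fixes X :: "complex^'n^'n"
  assumes "herm X"
  shows "norm X \<le> real CARD('n) ^ 2 * trnorm X"
  using order_trans[OF norm_le_sum_entries sum_mono[OF sum_mono[OF entry_le_trnorm[OF assms]]]]
  by (simp add: power2_eq_square)

lemma trnorm_le_norm:
  fixes X :: "complex^'n^'n"
  assumes "herm X"
  shows "trnorm X \<le> real CARD('n) ^ 3 * norm X"
proof -
  have entry_le: "cmod (X $ a $ c) \<le> norm X" for a c
    using Finite_Cartesian_Product.norm_nth_le[of "X $ a" c]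
      Finite_Cartesian_Product.norm_nth_le[of X a] by simp
  have "trnorm X \<le> real CARD('n) * (\<Sum>a\<in>UNIV. \<Sum>c\<in>UNIV. cmod (X $ a $ c))"
    by (rule trnorm_le_sum_entries[OF assms])
  also have "\<dots> \<le> real CARD('n) * (\<Sum>a::'n\<in>UNIV. \<Sum>c::'n\<in>UNIV. norm X)"
    by (intro mult_left_mono sum_mono entry_le) simp
  also have "\<dots> = real CARD('n) ^ 3 * norm X"
    by (simp add: power3_eq_cube)
  finally show ?thesis .
qed

lemma herm_closure_if_trdist_approachable:
  fixes \<sigma> :: "complex^'n^'n"
  assumes "herm \<sigma>" and "\<forall>\<eta>\<in>U. herm \<eta>" and approx: "\<And>e. e > 0 \<Longrightarrow> \<exists>\<eta>\<in>U. trdist \<sigma> \<eta> < e"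
  shows "\<sigma> \<in> closure U"
  unfolding closure_approachable
proof (intro allI impI)
  fix e :: real
  assume "e > 0"
  define C where "C = real CARD('n) ^ 2"
  have "C > 0"
    by (simp add: C_def)
  then obtain \<eta> where "\<eta> \<in> U" and "trdist \<sigma> \<eta> < e / (2 * C)"
    using approx[of "e / (2 * C)"] \<open>e > 0\<close> by auto
  moreover have "norm (\<sigma> - \<eta>) \<le> C * trnorm (\<sigma> - \<eta>)"
    unfolding C_def using \<open>\<eta> \<in> U\<close> assms by (intro norm_le_trnorm herm_diff) auto
  ultimately have "dist \<eta> \<sigma> < e"
    using \<open>C > 0\<close> by (simp add: dist_norm norm_minus_commute trdist_def field_simps)
  with \<open>\<eta> \<in> U\<close> show "\<exists>\<eta>\<in>U. dist \<eta> \<sigma> < e"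
    by blast
qed

lemma trnorm_small_near_herm:
  fixes \<kappa> :: "complex^'n^'n"
  assumes "herm \<kappa>" and "\<delta> > 0"
  obtains r where "r > 0" "\<And>\<omega>. herm \<omega> \<Longrightarrow> \<omega> \<in> ball \<kappa> r \<Longrightarrow> trnorm (\<omega> - \<kappa>) \<le> \<delta>"
proof
  show "\<delta> / real CARD('n) ^ 3 > 0"
    using assms by simp
  fix \<omega>
  assume "herm \<omega>" and "\<omega> \<in> ball \<kappa> (\<delta> / real CARD('n) ^ 3)"
  then have "herm (\<omega> - \<kappa>)" and "norm (\<omega> - \<kappa>) < \<delta> / real CARD('n) ^ 3"
    using assms by (auto simp: herm_diff dist_norm norm_minus_commute)
  then show "trnorm (\<omega> - \<kappa>) \<le> \<delta>"
    using trnorm_le_norm[of "\<omega> - \<kappa>"] by (simp add: field_simps)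
qed

lemma affine_herm_unit_trace: "affine {A::complex^'n^'n. herm A \<and> trace A = 1}"
  unfolding affine_def
proof (intro ballI allI impI, safe)
  fix x y :: "complex^'n^'n" and u v :: real
  assume "herm x" "herm y" "trace x = 1" "trace y = 1" "u + v = 1"
  then show "herm (u *\<^sub>R x + v *\<^sub>R y)"
    by (simp add: herm_def cadj_def vec_eq_iff scaleR_conv_of_real[where 'a=complex])
  have "trace (u *\<^sub>R x + v *\<^sub>R y) = complex_of_real (u + v)"
    using \<open>trace x = 1\<close> \<open>trace y = 1\<close>
    by (simp add: trace_def sum.distrib scaleR_conv_of_real[where 'a=complex] flip: sum_distrib_left)
  then show "trace (u *\<^sub>R x + v *\<^sub>R y) = 1"
    using \<open>u + v = 1\<close> by simp
qed

section \<open>Convex geometry\<close>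

lemma convex_UN_incseq:
  assumes "\<And>n. convex (S n)" and "incseq S"
  shows "convex (\<Union>n. S n)"
  unfolding convex_def
proof (intro ballI allI impI)
  fix x y and u v :: real
  assume "x \<in> (\<Union>n. S n)" "y \<in> (\<Union>n. S n)" "0 \<le> u" "0 \<le> v" "u + v = 1"
  then obtain a b where "x \<in> S a" "y \<in> S b"
    by blast
  then have "x \<in> S (max a b)" "y \<in> S (max a b)"
    using incseqD[OF \<open>incseq S\<close>, of a "max a b"] incseqD[OF \<open>incseq S\<close>, of b "max a b"] by auto
  then have "u *\<^sub>R x + v *\<^sub>R y \<in> S (max a b)"
    using assms(1) \<open>0 \<le> u\<close> \<open>0 \<le> v\<close> \<open>u + v = 1\<close> unfolding convex_def by blast
  then show "u *\<^sub>R x + v *\<^sub>R y \<in> (\<Union>n. S n)"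
    by blast
qed

lemma convex_mem_if_relative_ball_subset_closure:
  fixes U :: "'a::euclidean_space set"
  assumes "convex U" and "affine A" and "U \<subseteq> A" and "x \<in> A" and "r > 0"
    and ball: "ball x r \<inter> A \<subseteq> closure U"
  shows "x \<in> U"
proof -
  have "affine hull (closure U) \<subseteq> A"
    using hull_minimal[of U A affine] \<open>U \<subseteq> A\<close> \<open>affine A\<close> by simp
  then have "x \<in> rel_interior (closure U)"
    unfolding mem_rel_interior using ball \<open>x \<in> A\<close> \<open>r > 0\<close>
    by (intro exI[of _ "ball x r"]) auto
  then show ?thesis
    using convex_rel_interior_closure[OF \<open>convex U\<close>] rel_interior_subset by blast
qed

theorem mainTheorem8:
  fixes S :: "nat \<Rightarrow> (complex^'n^'n) set"
    and V :: "(complex^'n^'n) set"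
    and \<kappa> :: "complex^'n^'n"
  assumes S_dens: "\<And>n. S n \<subseteq> {\<rho>. density \<rho>}"
    and S_closed: "\<And>n. trclosed (S n)"
    and S_convex: "\<And>n. convex (S n)"
    and S_mono: "\<And>n. S n \<subseteq> S (Suc n)"
    and V_dens: "V \<subseteq> {\<rho>. density \<rho>}"
    and V_approx: "\<And>\<sigma> e. \<sigma> \<in> V \<Longrightarrow> e > 0 \<Longrightarrow> \<exists>N. \<exists>\<eta>\<in>S N. trdist \<sigma> \<eta> < e"
    and kV: "\<kappa> \<in> V"
    and k_int: "\<exists>\<delta>>0. \<forall>\<omega>. herm \<omega> \<and> trace \<omega> = 1 \<and> trnorm (\<omega> - \<kappa>) \<le> \<delta>
                  \<longrightarrow> density \<omega> \<and> \<omega> \<in> V"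
  shows "\<exists>n. \<kappa> \<in> S n"
proof -
  define U where "U = (\<Union>n. S n)"
  define H where "H = {A::complex^'n^'n. herm A \<and> trace A = 1}"
  have U_H: "U \<subseteq> H"
    using S_dens by (auto simp: U_def H_def density_def)
  have V_H: "V \<subseteq> H"
    using V_dens by (auto simp: H_def density_def)
  have "convex U"
    unfolding U_def using S_convex by (rule convex_UN_incseq) (intro incseq_SucI S_mono)
  have V_closure: "V \<subseteq> closure U"
    using U_H V_H V_approx by (auto simp: U_def H_def intro!: herm_closure_if_trdist_approachable)
  obtain \<delta> where "\<delta> > 0" and \<delta>: "\<And>\<omega>. \<omega> \<in> H \<Longrightarrow> trnorm (\<omega> - \<kappa>) \<le> \<delta> \<Longrightarrow> \<omega> \<in> V"
    using k_int by (auto simp: H_def)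
  obtain r where "r > 0"
    and r: "\<And>\<omega>. herm \<omega> \<Longrightarrow> \<omega> \<in> ball \<kappa> r \<Longrightarrow> trnorm (\<omega> - \<kappa>) \<le> \<delta>"
    using trnorm_small_near_herm[OF _ \<open>\<delta> > 0\<close>] kV V_H by (auto simp: H_def)
  have "ball \<kappa> r \<inter> H \<subseteq> closure U"
    using r \<delta> V_closure by (auto simp: H_def)
  moreover have "affine H"
    unfolding H_def by (rule affine_herm_unit_trace)
  ultimately have "\<kappa> \<in> U"
    using convex_mem_if_relative_ball_subset_closure[of U H \<kappa> r] \<open>convex U\<close> U_H kV V_H \<open>r > 0\<close>
    by blast
  then show ?thesis
    by (simp add: U_def)
qed

end
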